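(* Let $n,\alpha$ be positive integers and $\varepsilon\in(0,1)$. Suppose a dataset $S$ over the universe $[n]$ is distributed across $\alpha$ players with the promise that there are at most $C\le F_0(S)$ pairwise collisions. Then there exists a protocol that uses total communication \[\tilde{O}\left(\alpha\log n+\max\left(\frac{1}{F_0(S)},\varepsilon^2\right)\cdot\frac{C}{\varepsilon^2}\log n\right)\] bits and, with probability at least $\frac{2}{3}$, outputs a $(1+\varepsilon)$-approximation to $F_0(S)$.
   Context: Distributed distinct element estimation (coordinator model): there are $\alpha$ servers (players), one of which acts as coordinator; server $a$ holds a vector $v^{(a)}\in\{0,1\}^n$, and $S$ denotes the union (multiset) of all items held by the servers. All communication goes between the coordinator and the other servers; the communication cost is the total number of bits exchanged in the worst case. $F_0(S)$ is the number of $j\in[n]$ with $v^{(a)}_j=1$ for some $a$. The number of pairwise collisions is the number of triples $(a,b,i)$ with $1\le a<b\le\alpha$, $i\in[n]$ and $v^{(a)}_i=v^{(b)}_i=1$. A $(1+\varepsilon)$-approximation to $F$ is a value $\hat F$ with $(1-\varepsilon)F\le\hat F\le(1+\varepsilon)F$. $\tilde{O}$ hides polylogarithmic factors. *)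

theory Defs
  imports "HOL-Probability.Probability"
begin

text \<open>Players are indexed by {..<alpha}; player 0 is the coordinator,
  players 1..alpha-1 are the servers. Player a holds a set X a \<subseteq> {..<n}
  (the support of its vector v^(a)). Each player a has a private random seed drawn
  independently from a discrete distribution rnd a.

  The protocol proceeds in exchanges: the coordinator (knowing its input, its seed and the
  whole transcript so far) either halts or sends a message m to a server a; server a then
  replies with a message r computed from its input, its seed, its own view (the previous
  exchanges with it) and m. Each exchange costs 1 + |m| + |r| bits (the extra bit accounts
  for delimiting / signalling the exchange).\<close>

type_synonym transcript = "(nat \<times> bool list \<times> bool list) list"

record protocol =
  steps :: nat
  rnd :: "nat \<Rightarrow> nat pmf"
  coord_act :: "nat set \<Rightarrow> nat \<Rightarrow> transcript \<Rightarrow> (nat \<times> bool list) option"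
  server_reply :: "nat \<Rightarrow> nat set \<Rightarrow> nat \<Rightarrow> (bool list \<times> bool list) list \<Rightarrow> bool list \<Rightarrow> bool list"
  out :: "nat set \<Rightarrow> nat \<Rightarrow> transcript \<Rightarrow> real"

definition view :: "nat \<Rightarrow> transcript \<Rightarrow> (bool list \<times> bool list) list" where
  "view a t = map snd (filter (\<lambda>x. fst x = a) t)"

fun exec :: "protocol \<Rightarrow> nat \<Rightarrow> (nat \<Rightarrow> nat set) \<Rightarrow> (nat \<Rightarrow> nat) \<Rightarrow> nat \<Rightarrow> transcript \<Rightarrow> transcript" where
  "exec P \<alpha> X rs 0 t = t"
| "exec P \<alpha> X rs (Suc k) t =
     (case coord_act P (X 0) (rs 0) t of
        None \<Rightarrow> t
      | Some (a, m) \<Rightarrow>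
          (if 0 < a \<and> a < \<alpha>
           then exec P \<alpha> X rs k (t @ [(a, m, server_reply P a (X a) (rs a) (view a t) m)])
           else t))"

definition final_transcript :: "protocol \<Rightarrow> nat \<Rightarrow> (nat \<Rightarrow> nat set) \<Rightarrow> (nat \<Rightarrow> nat) \<Rightarrow> transcript" where
  "final_transcript P \<alpha> X rs = exec P \<alpha> X rs (steps P) []"

definition comm_cost :: "protocol \<Rightarrow> nat \<Rightarrow> (nat \<Rightarrow> nat set) \<Rightarrow> (nat \<Rightarrow> nat) \<Rightarrow> nat" where
  "comm_cost P \<alpha> X rs =
     (\<Sum>(a, m, r) \<leftarrow> final_transcript P \<alpha> X rs. 1 + length m + length r)"

definition output_of :: "protocol \<Rightarrow> nat \<Rightarrow> (nat \<Rightarrow> nat set) \<Rightarrow> (nat \<Rightarrow> nat) \<Rightarrow> real" where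
  "output_of P \<alpha> X rs = out P (X 0) (rs 0) (final_transcript P \<alpha> X rs)"

definition seeds :: "protocol \<Rightarrow> nat \<Rightarrow> (nat \<Rightarrow> nat) pmf" where
  "seeds P \<alpha> = Pi_pmf {..<\<alpha>} 0 (rnd P)"

definition F0 :: "nat \<Rightarrow> (nat \<Rightarrow> nat set) \<Rightarrow> nat" where
  "F0 \<alpha> X = card (\<Union>a<\<alpha>. X a)"

definition collisions :: "nat \<Rightarrow> (nat \<Rightarrow> nat set) \<Rightarrow> nat" where
  "collisions \<alpha> X = card {(a, b, i). a < b \<and> b < \<alpha> \<and> i \<in> X a \<and> i \<in> X b}"

end

theory Submission
  imports Defs
begin

text \<open>
  The servers first report their set sizes, which gives \<open>S = \<Sum>a |X a|\<close>.  Since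
  \<open>S - F0 = \<Sum>i (m i - 1)\<close>, where \<open>m i\<close> counts the servers holding \<open>i\<close>, and
  \<open>\<Sum>i m i (m i - 1) \<le> 2 C\<close>, this excess is at most \<open>C \<le> F0\<close>; it is estimated by
  subsampling the universe with \<open>k\<close> random affine hashes over GF(2).  The coordinator
  broadcasts the hashes, the servers send their surviving elements, and \<open>2 ^ k\<close> times the
  number of repeated survivors is an unbiased estimate of the excess whose variance is at
  most \<open>2 ^ (k + 1) * C\<close>, by pairwise independence of the hashes.  Taking \<open>2 ^ k\<close> close
  to \<open>\<epsilon>\<^sup>2 S\<^sup>2 / C\<close> makes Chebyshev's bound \<open>1/6\<close>, while the expected number of survivors,
  \<open>S / 2 ^ k = O(1 + C / (\<epsilon>\<^sup>2 F0))\<close>, is what the communication pays for.  Aborting when the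
  survivors exceed six times their expectation fails with probability at most \<open>1/6\<close> by
  Markov's inequality and turns this into a worst-case bound.
\<close>

section \<open>Discrete distributions\<close>

lemma replicate_pmf_Suc_pair:
  "replicate_pmf (Suc n) p = map_pmf (\<lambda>(x, xs). x # xs) (pair_pmf p (replicate_pmf n p))"
  by (simp add: pair_pmf_def map_bind_pmf bind_assoc_pmf bind_return_pmf)

lemma finite_set_replicate_pmf:
  "finite (set_pmf p) \<Longrightarrow> finite (set_pmf (replicate_pmf n p))"
  by (simp add: set_replicate_pmf lists_eq_set finite_lists_length_eq)

lemma prob_replicate_pmf_take:
  fixes p :: "'a::countable pmf"
  assumes "k \<le> K"
  shows "measure_pmf.prob (replicate_pmf K p) {xs. \<forall>x\<in>set (take k xs). R x}
    = measure_pmf.prob p {x. R x} ^ k"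
  using assms
proof (induction K arbitrary: k)
  case (Suc K)
  show ?case
  proof (cases k)
    case (Suc k')
    have "(\<lambda>(x, xs). x # xs) -` {xs. \<forall>x\<in>set (take k xs). R x}
      = {x. R x} \<times> {xs. \<forall>x\<in>set (take k' xs). R x}"
      using Suc by auto
    then show ?thesis
      using Suc.IH[of k'] Suc.prems \<open>k = Suc k'\<close>
      by (simp add: replicate_pmf_Suc_pair measure_pmf_prob_product del: replicate_pmf.simps)
  qed simp
qed simp

lemma prob_pmf_compl: "measure_pmf.prob M (- A) = 1 - measure_pmf.prob M A"
  using measure_pmf.prob_compl[of A M] by (simp add: Compl_eq_Diff_UNIV)

lemma pmf_Markov_inequality:
  fixes u :: "'a \<Rightarrow> real"
  assumes "finite (set_pmf M)" "\<And>x. 0 \<le> u x" "0 < c"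
  shows "measure_pmf.prob M {x. c \<le> u x} \<le> measure_pmf.expectation M u / c"
  using integral_Markov_inequality_measure[of "measure_pmf M" u UNIV c] assms
  by (simp add: integrable_measure_pmf_finite)

lemma prob_Pi_pmf_component:
  assumes "finite I" "i \<in> I"
  shows "measure_pmf.prob (Pi_pmf I d p) {f. Q (f i)} = measure_pmf.prob (p i) {x. Q x}"
proof -
  have "p i = map_pmf (\<lambda>f. f i) (Pi_pmf I d p)"
    using assms by (simp add: Pi_pmf_component)
  then show ?thesis
    by (simp add: vimage_def)
qed

section \<open>Sampling by random parity hashes\<close>

definition coin :: "bool pmf" where "coin = pmf_of_set UNIV"

lemma prob_coin_singleton [simp]: "measure_pmf.prob coin {b} = 1 / 2"
  by (simp add: coin_def measure_pmf_of_set)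

lemma prob_pair_coin:
  fixes M :: "'a::countable pmf"
  shows "measure_pmf.prob (pair_pmf coin M) {(b, x). Q b x}
    = (measure_pmf.prob M {x. Q True x} + measure_pmf.prob M {x. Q False x}) / 2"
proof -
  have split: "{(b, x). Q b x} = {True} \<times> {x. Q True x} \<union> {False} \<times> {x. Q False x}"
    by (auto; metis (full_types))
  show ?thesis
    unfolding split by (subst measure_pmf.finite_measure_Union) (auto simp: measure_pmf_prob_product)
qed

lemma prob_replicate_coin_Suc:
  "measure_pmf.prob (replicate_pmf (Suc w) coin) {bs. Q bs}
    = (measure_pmf.prob (replicate_pmf w coin) {bs. Q (True # bs)}
       + measure_pmf.prob (replicate_pmf w coin) {bs. Q (False # bs)}) / 2"
  using prob_pair_coin[of "replicate_pmf w coin" "\<lambda>b bs. Q (b # bs)"]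
  by (simp add: replicate_pmf_Suc_pair vimage_def case_prod_unfold del: replicate_pmf.simps)

text \<open>\<open>parity bs x\<close> is the inner product over GF(2) of \<open>bs\<close> with the binary digits of \<open>x\<close>,
  least significant digit first.\<close>
primrec parity :: "bool list \<Rightarrow> nat \<Rightarrow> bool" where
  "parity [] x = False"
| "parity (c # bs) x = ((c \<and> odd x) \<noteq> parity bs (x div 2))"

lemma prob_parity_eq:
  fixes x y :: nat
  assumes "x \<noteq> y" "x < 2 ^ w" "y < 2 ^ w"
  shows "measure_pmf.prob (replicate_pmf w coin) {bs. parity bs x = parity bs y} = 1 / 2"
  using assms
proof (induction w arbitrary: x y)
  case (Suc w)
  let ?P = "measure_pmf.prob (replicate_pmf w coin)"
  let ?eq = "{bs. parity bs (x div 2) = parity bs (y div 2)}"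
  have "{bs. parity (True # bs) x = parity (True # bs) y} = {bs. (odd x = odd y) = (bs \<in> ?eq)}"
       "{bs. parity (False # bs) x = parity (False # bs) y} = ?eq"
    by auto
  then have prob: "measure_pmf.prob (replicate_pmf (Suc w) coin) {bs. parity bs x = parity bs y}
    = (?P {bs. (odd x = odd y) = (bs \<in> ?eq)} + ?P ?eq) / 2"
    by (simp only: prob_replicate_coin_Suc)
  show ?case
  proof (cases "odd x = odd y")
    case True
    then have "x div 2 \<noteq> y div 2"
      using Suc.prems(1) by (metis div_mult_mod_eq odd_iff_mod_2_eq_one even_iff_mod_2_eq_zero)
    moreover have "x div 2 < 2 ^ w" "y div 2 < 2 ^ w"
      using Suc.prems by auto
    ultimately show ?thesis
      using prob True Suc.IH by simp
  next
    case False
    then have "{bs. (odd x = odd y) = (bs \<in> ?eq)} = - ?eq"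
      by auto
    then show ?thesis
      using prob by (simp add: prob_pmf_compl)
  qed
qed simp

text \<open>A pair \<open>(b, a)\<close> drawn from \<open>hash_pmf w\<close> is the random affine map \<open>x \<mapsto> parity a x + b\<close>
  over GF(2) on \<open>{..<2 ^ w}\<close>, and \<open>x\<close> passes it if the map vanishes there.\<close>
definition hash_pmf :: "nat \<Rightarrow> (bool \<times> bool list) pmf" where
  "hash_pmf w = pair_pmf coin (replicate_pmf w coin)"

fun passes :: "bool \<times> bool list \<Rightarrow> nat \<Rightarrow> bool" where
  "passes (b, a) x \<longleftrightarrow> parity a x = b"

lemma prob_passes: "measure_pmf.prob (hash_pmf w) {h. passes h x} = 1 / 2"
proof -
  have "{h. passes h x} = {(b, a). parity a x = b}" "{a. \<not> parity a x} = - {a. parity a x}"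
    by auto
  then show ?thesis
    by (simp add: hash_pmf_def prob_pair_coin prob_pmf_compl)
qed

lemma prob_passes_both:
  assumes "x \<noteq> y" "x < 2 ^ w" "y < 2 ^ w"
  shows "measure_pmf.prob (hash_pmf w) {h. passes h x \<and> passes h y} = 1 / 4"
proof -
  let ?P = "measure_pmf.prob (replicate_pmf w coin)"
  have "?P {a. parity a x \<and> parity a y} + ?P {a. \<not> parity a x \<and> \<not> parity a y}
     = ?P ({a. parity a x \<and> parity a y} \<union> {a. \<not> parity a x \<and> \<not> parity a y})"
    by (subst measure_pmf.finite_measure_Union) auto
  also have "{a. parity a x \<and> parity a y} \<union> {a. \<not> parity a x \<and> \<not> parity a y}
    = {a. parity a x = parity a y}"
    by auto
  moreover have "{h. passes h x \<and> passes h y} = {(b, a). parity a x = b \<and> parity a y = b}"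
    by auto
  ultimately show ?thesis
    using prob_parity_eq[OF assms] by (simp add: hash_pmf_def prob_pair_coin)
qed

definition survives :: "(bool \<times> bool list) list \<Rightarrow> nat \<Rightarrow> bool" where
  "survives hs x \<longleftrightarrow> (\<forall>h \<in> set hs. passes h x)"

definition sampled :: "nat \<Rightarrow> (bool \<times> bool list) list \<Rightarrow> nat set" where
  "sampled k hs = {x. survives (take k hs) x}"

lemma finite_set_hash_pmf: "finite (set_pmf (hash_pmf w))"
  by (simp add: hash_pmf_def coin_def finite_set_replicate_pmf)

lemma finite_set_hashes: "finite (set_pmf (replicate_pmf K (hash_pmf w)))"
  by (intro finite_set_replicate_pmf finite_set_hash_pmf)

lemma integrable_hashes [simp]:
  "integrable (measure_pmf (replicate_pmf K (hash_pmf w))) (f :: _ \<Rightarrow> real)"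
  by (intro integrable_measure_pmf_finite finite_set_hashes)

lemma length_in_set_hash_pmf: "(b, a) \<in> set_pmf (hash_pmf w) \<Longrightarrow> length a = w"
  by (auto simp: hash_pmf_def set_replicate_pmf)

lemma indicator_sampled_eq:
  "(\<lambda>hs. indicator (sampled k hs) x :: real) = indicator {hs. \<forall>h\<in>set (take k hs). passes h x}"
  "(\<lambda>hs. indicator (sampled k hs) x * indicator (sampled k hs) y :: real)
    = indicator {hs. \<forall>h\<in>set (take k hs). passes h x \<and> passes h y}"
  by (auto simp: fun_eq_iff indicator_def sampled_def survives_def)

lemma expectation_sampled:
  assumes "k \<le> K"
  shows "measure_pmf.expectation (replicate_pmf K (hash_pmf w)) (\<lambda>hs. indicator (sampled k hs) x)
    = (1 / 2 :: real) ^ k"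
  using prob_replicate_pmf_take[OF assms, of "hash_pmf w" "\<lambda>h. passes h x"]
  by (simp add: indicator_sampled_eq prob_passes)

lemma expectation_sampled_both:
  assumes "k \<le> K" "x \<noteq> y" "x < 2 ^ w" "y < 2 ^ w"
  shows "measure_pmf.expectation (replicate_pmf K (hash_pmf w))
      (\<lambda>hs. indicator (sampled k hs) x * indicator (sampled k hs) y) = (1 / 4 :: real) ^ k"
  using prob_replicate_pmf_take[OF assms(1), of "hash_pmf w" "\<lambda>h. passes h x \<and> passes h y"]
  by (simp add: indicator_sampled_eq prob_passes_both[OF assms(2-)])

lemma expectation_sampled_covariance:
  assumes "k \<le> K" "x < 2 ^ w" "y < 2 ^ w"
  shows "measure_pmf.expectation (replicate_pmf K (hash_pmf w))
      (\<lambda>hs. (indicator (sampled k hs) x - (1 / 2) ^ k) * (indicator (sampled k hs) y - (1 / 2) ^ k))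
    = (if x = y then (1 / 2) ^ k - (1 / 4 :: real) ^ k else 0)"
proof -
  let ?E = "measure_pmf.expectation (replicate_pmf K (hash_pmf w))"
  let ?p = "(1 / 2 :: real) ^ k"
  let ?Z = "\<lambda>x hs. indicator (sampled k hs) x :: real"
  have "(\<lambda>hs. (?Z x hs - ?p) * (?Z y hs - ?p)) = (\<lambda>hs. ?Z x hs * ?Z y hs - ?p * ?Z y hs - ?p * ?Z x hs + ?p * ?p)"
    by (auto simp: fun_eq_iff algebra_simps)
  then have "?E (\<lambda>hs. (?Z x hs - ?p) * (?Z y hs - ?p)) = ?E (\<lambda>hs. ?Z x hs * ?Z y hs) - ?p * ?p"
    using expectation_sampled[OF assms(1)] by simp
  moreover have "(1 / 4 :: real) ^ k = ?p * ?p"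
    by (simp add: power_mult_distrib[symmetric])
  moreover have "(\<lambda>hs. ?Z x hs * ?Z x hs) = ?Z x"
    by (simp add: fun_eq_iff indicator_def)
  ultimately show ?thesis
    using expectation_sampled[OF assms(1)] expectation_sampled_both[OF assms(1) _ assms(2,3)] by auto
qed

lemma expectation_sampled_sum_square:
  assumes "k \<le> K" "finite U" "U \<subseteq> {..<2 ^ w}"
  shows "measure_pmf.expectation (replicate_pmf K (hash_pmf w))
      (\<lambda>hs. (\<Sum>x\<in>U. v x * (indicator (sampled k hs) x - (1 / 2) ^ k))\<^sup>2)
    = (\<Sum>x\<in>U. (v x)\<^sup>2) * ((1 / 2) ^ k - (1 / 4 :: real) ^ k)"
proof -
  let ?E = "measure_pmf.expectation (replicate_pmf K (hash_pmf w))"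
  let ?D = "\<lambda>x hs. indicator (sampled k hs) x - (1 / 2 :: real) ^ k"
  have "(\<lambda>hs. (\<Sum>x\<in>U. v x * ?D x hs)\<^sup>2) = (\<lambda>hs. \<Sum>x\<in>U. \<Sum>y\<in>U. v x * v y * (?D x hs * ?D y hs))"
    by (auto simp: fun_eq_iff power2_eq_square sum_product algebra_simps)
  then have "?E (\<lambda>hs. (\<Sum>x\<in>U. v x * ?D x hs)\<^sup>2) = (\<Sum>x\<in>U. \<Sum>y\<in>U. v x * v y * ?E (\<lambda>hs. ?D x hs * ?D y hs))"
    by simp
  also have "\<dots> = (\<Sum>x\<in>U. \<Sum>y\<in>U. v x * v y * (if x = y then (1 / 2) ^ k - (1 / 4) ^ k else 0))"
    using assms by (intro sum.cong refl) (auto simp: subset_iff expectation_sampled_covariance)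
  also have "\<dots> = (\<Sum>x\<in>U. (v x)\<^sup>2) * ((1 / 2) ^ k - (1 / 4) ^ k)"
    using assms(2) by (simp add: power2_eq_square if_distrib sum.delta sum_distrib_right cong: if_cong)
  finally show ?thesis .
qed

lemma prob_sampled_weight_ge:
  assumes "k \<le> K" "finite U" "\<And>x. 0 \<le> v x" "0 < c"
  shows "measure_pmf.prob (replicate_pmf K (hash_pmf w))
      {hs. c \<le> (\<Sum>x\<in>U. v x * indicator (sampled k hs) x)} \<le> (1 / 2) ^ k * (\<Sum>x\<in>U. v x) / c"
proof -
  let ?M = "replicate_pmf K (hash_pmf w)"
  have "measure_pmf.prob ?M {hs. c \<le> (\<Sum>x\<in>U. v x * indicator (sampled k hs) x)}
      \<le> measure_pmf.expectation ?M (\<lambda>hs. \<Sum>x\<in>U. v x * indicator (sampled k hs) x) / c"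
    using assms by (intro pmf_Markov_inequality finite_set_hashes sum_nonneg) auto
  also have "measure_pmf.expectation ?M (\<lambda>hs. \<Sum>x\<in>U. v x * indicator (sampled k hs) x)
      = (1 / 2) ^ k * (\<Sum>x\<in>U. v x)"
    using expectation_sampled[OF assms(1)] by (simp add: sum_distrib_right mult.commute)
  finally show ?thesis .
qed

lemma prob_sampled_deviation_ge:
  assumes "k \<le> K" "finite U" "U \<subseteq> {..<2 ^ w}" "0 < \<delta>"
  shows "measure_pmf.prob (replicate_pmf K (hash_pmf w))
      {hs. \<delta> \<le> \<bar>\<Sum>x\<in>U. v x * (indicator (sampled k hs) x - (1 / 2) ^ k)\<bar>}
    \<le> (\<Sum>x\<in>U. (v x)\<^sup>2) * ((1 / 2) ^ k - (1 / 4) ^ k) / \<delta>\<^sup>2"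
proof -
  let ?M = "replicate_pmf K (hash_pmf w)"
  let ?Y = "\<lambda>hs. \<Sum>x\<in>U. v x * (indicator (sampled k hs) x - (1 / 2) ^ k)"
  have "{hs. \<delta> \<le> \<bar>?Y hs\<bar>} \<subseteq> {hs. \<delta>\<^sup>2 \<le> (?Y hs)\<^sup>2}"
    using assms(4) by (auto simp: abs_le_square_iff[symmetric])
  then have "measure_pmf.prob ?M {hs. \<delta> \<le> \<bar>?Y hs\<bar>} \<le> measure_pmf.prob ?M {hs. \<delta>\<^sup>2 \<le> (?Y hs)\<^sup>2}"
    by (intro measure_pmf.finite_measure_mono) auto
  also have "\<dots> \<le> measure_pmf.expectation ?M (\<lambda>hs. (?Y hs)\<^sup>2) / \<delta>\<^sup>2"
    using assms(4) by (intro pmf_Markov_inequality finite_set_hashes) auto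
  also have "\<dots> = (\<Sum>x\<in>U. (v x)\<^sup>2) * ((1 / 2) ^ k - (1 / 4) ^ k) / \<delta>\<^sup>2"
    by (simp add: expectation_sampled_sum_square[OF assms(1-3)])
  finally show ?thesis .
qed

section \<open>Multiplicities and collisions\<close>

definition occurrences :: "nat \<Rightarrow> (nat \<Rightarrow> nat set) \<Rightarrow> nat \<Rightarrow> nat" where
  "occurrences \<alpha> X i = card {a. a < \<alpha> \<and> i \<in> X a}"

definition total_size :: "nat \<Rightarrow> (nat \<Rightarrow> nat set) \<Rightarrow> nat" where
  "total_size \<alpha> X = (\<Sum>a<\<alpha>. card (X a))"

lemma occurrences_pos: "i \<in> (\<Union>a<\<alpha>. X a) \<Longrightarrow> 1 \<le> occurrences \<alpha> X i"
  by (auto simp: occurrences_def Suc_le_eq card_gt_0_iff)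

lemma sum_card_Int_eq_sum_occurrences:
  assumes "\<forall>a<\<alpha>. finite (X a)"
  shows "(\<Sum>a<\<alpha>. card (X a \<inter> A)) = (\<Sum>i\<in>(\<Union>a<\<alpha>. X a) \<inter> A. occurrences \<alpha> X i)"
proof -
  let ?U = "\<Union>a<\<alpha>. X a"
  have "(\<Sum>a<\<alpha>. card (X a \<inter> A)) = card (SIGMA a:{..<\<alpha>}. X a \<inter> A)"
    using assms by (subst card_SigmaI) auto
  also have "(SIGMA a:{..<\<alpha>}. X a \<inter> A) = prod.swap ` (SIGMA i:?U \<inter> A. {a. a < \<alpha> \<and> i \<in> X a})"
    by (auto simp: image_iff)
  also have "card \<dots> = card (SIGMA i:?U \<inter> A. {a. a < \<alpha> \<and> i \<in> X a})"
    by (rule card_image) (simp add: inj_on_def)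
  also have "\<dots> = (\<Sum>i\<in>?U \<inter> A. occurrences \<alpha> X i)"
    using assms by (subst card_SigmaI) (auto simp: occurrences_def)
  finally show ?thesis .
qed

lemma total_size_eq_sum_occurrences:
  "\<forall>a<\<alpha>. finite (X a) \<Longrightarrow> total_size \<alpha> X = (\<Sum>i\<in>(\<Union>a<\<alpha>. X a). occurrences \<alpha> X i)"
  using sum_card_Int_eq_sum_occurrences[of \<alpha> X UNIV] by (simp add: total_size_def)

lemma card_times_pred_le_ordered_pairs:
  assumes "finite K"
  shows "card K * (card K - 1) \<le> 2 * card {(a, b). a < b \<and> a \<in> K \<and> b \<in> (K :: 'a::linorder set)}"
proof -
  let ?P = "{(a, b). a < b \<and> a \<in> K \<and> b \<in> K}"
  have "finite ?P"
    by (rule finite_subset[of _ "K \<times> K"]) (use assms in auto)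
  have "K \<times> K - (\<lambda>a. (a, a)) ` K \<subseteq> ?P \<union> prod.swap ` ?P"
    by (auto simp: image_iff neq_iff)
  then have "card (K \<times> K - (\<lambda>a. (a, a)) ` K) \<le> card (?P \<union> prod.swap ` ?P)"
    using \<open>finite ?P\<close> by (intro card_mono) auto
  also have "\<dots> \<le> card ?P + card (prod.swap ` ?P)"
    by (rule card_Un_le)
  also have "\<dots> \<le> 2 * card ?P"
    using card_image_le[OF \<open>finite ?P\<close>, of prod.swap] by simp
  finally have "card (K \<times> K - (\<lambda>a. (a, a)) ` K) \<le> 2 * card ?P" .
  moreover have "card (K \<times> K - (\<lambda>a. (a, a)) ` K) = card K * card K - card K"
    using assms by (subst card_Diff_subset) (auto simp: card_cartesian_product card_image inj_on_def)
  ultimately show ?thesis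
    by (simp add: diff_mult_distrib2)
qed

lemma sum_occurrences_pairs_le_collisions:
  assumes "\<forall>a<\<alpha>. finite (X a)"
  shows "(\<Sum>i\<in>(\<Union>a<\<alpha>. X a). occurrences \<alpha> X i * (occurrences \<alpha> X i - 1)) \<le> 2 * collisions \<alpha> X"
proof -
  let ?U = "\<Union>a<\<alpha>. X a"
  let ?P = "\<lambda>i. {(a, b). a < b \<and> a \<in> {a. a < \<alpha> \<and> i \<in> X a} \<and> b \<in> {a. a < \<alpha> \<and> i \<in> X a}}"
  have "{(a, b, i). a < b \<and> b < \<alpha> \<and> i \<in> X a \<and> i \<in> X b} = (\<lambda>(i, a, b). (a, b, i)) ` (SIGMA i:?U. ?P i)"
    by (auto simp: image_iff)
  then have "collisions \<alpha> X = card ((\<lambda>(i, a, b). (a, b, i)) ` (SIGMA i:?U. ?P i))"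
    by (simp add: collisions_def)
  also have "\<dots> = card (SIGMA i:?U. ?P i)"
    by (rule card_image) (auto simp: inj_on_def)
  also have "\<dots> = (\<Sum>i\<in>?U. card (?P i))"
    using assms by (subst card_SigmaI) (auto intro: finite_subset[of _ "{..<\<alpha>} \<times> {..<\<alpha>}"])
  finally have "collisions \<alpha> X = (\<Sum>i\<in>?U. card (?P i))" .
  moreover have "occurrences \<alpha> X i * (occurrences \<alpha> X i - 1) \<le> 2 * card (?P i)" for i
    unfolding occurrences_def by (rule card_times_pred_le_ordered_pairs) simp
  ultimately show ?thesis
    by (simp add: sum_distrib_left sum_mono)
qed

lemma sum_occurrences_excess_square_le:
  assumes "\<forall>a<\<alpha>. finite (X a)"
  shows "(\<Sum>i\<in>(\<Union>a<\<alpha>. X a). (real (occurrences \<alpha> X i) - 1)\<^sup>2) \<le> 2 * real (collisions \<alpha> X)"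
proof -
  have "(\<Sum>i\<in>(\<Union>a<\<alpha>. X a). (real (occurrences \<alpha> X i) - 1)\<^sup>2)
      \<le> (\<Sum>i\<in>(\<Union>a<\<alpha>. X a). real (occurrences \<alpha> X i * (occurrences \<alpha> X i - 1)))"
  proof (intro sum_mono)
    fix i assume "i \<in> (\<Union>a<\<alpha>. X a)"
    with occurrences_pos have "1 \<le> occurrences \<alpha> X i" .
    then show "(real (occurrences \<alpha> X i) - 1)\<^sup>2 \<le> real (occurrences \<alpha> X i * (occurrences \<alpha> X i - 1))"
      by (simp add: of_nat_diff power2_eq_square mult_right_mono)
  qed
  also have "\<dots> = real (\<Sum>i\<in>(\<Union>a<\<alpha>. X a). occurrences \<alpha> X i * (occurrences \<alpha> X i - 1))"
    by (rule of_nat_sum[symmetric])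
  also have "\<dots> \<le> 2 * real (collisions \<alpha> X)"
    using sum_occurrences_pairs_le_collisions[OF assms] by linarith
  finally show ?thesis .
qed

lemma F0_le_total_size:
  "\<forall>a<\<alpha>. finite (X a) \<Longrightarrow> F0 \<alpha> X \<le> total_size \<alpha> X"
  unfolding F0_def total_size_def by (rule card_UN_le) simp

lemma total_size_le_F0_plus_collisions:
  assumes "\<forall>a<\<alpha>. finite (X a)"
  shows "total_size \<alpha> X \<le> F0 \<alpha> X + collisions \<alpha> X"
proof -
  let ?U = "\<Union>a<\<alpha>. X a"
  have "(\<Sum>i\<in>?U. 2 * (occurrences \<alpha> X i - 1)) \<le> (\<Sum>i\<in>?U. occurrences \<alpha> X i * (occurrences \<alpha> X i - 1))"
  proof (intro sum_mono)
    fix i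
    show "2 * (occurrences \<alpha> X i - 1) \<le> occurrences \<alpha> X i * (occurrences \<alpha> X i - 1)"
      by (cases "2 \<le> occurrences \<alpha> X i") (auto intro: mult_right_mono)
  qed
  also have "\<dots> \<le> 2 * collisions \<alpha> X"
    by (rule sum_occurrences_pairs_le_collisions[OF assms])
  finally have "(\<Sum>i\<in>?U. occurrences \<alpha> X i - 1) \<le> collisions \<alpha> X"
    by (simp flip: sum_distrib_left)
  moreover have "total_size \<alpha> X = (\<Sum>i\<in>?U. 1 + (occurrences \<alpha> X i - 1))"
    unfolding total_size_eq_sum_occurrences[OF assms]
  proof (intro sum.cong refl)
    fix i assume "i \<in> ?U"
    then have "1 \<le> occurrences \<alpha> X i"
      by (rule occurrences_pos)
    then show "occurrences \<alpha> X i = 1 + (occurrences \<alpha> X i - 1)"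
      by simp
  qed
  moreover have "(\<Sum>i\<in>?U. 1 + (occurrences \<alpha> X i - 1)) = F0 \<alpha> X + (\<Sum>i\<in>?U. occurrences \<alpha> X i - 1)"
    by (simp only: sum.distrib card_eq_sum F0_def)
  ultimately show ?thesis
    by linarith
qed

section \<open>Bit encodings and protocol runs\<close>

primrec to_bits :: "nat \<Rightarrow> nat \<Rightarrow> bool list" where
  "to_bits 0 x = []"
| "to_bits (Suc w) x = odd x # to_bits w (x div 2)"

primrec of_bits :: "bool list \<Rightarrow> nat" where
  "of_bits [] = 0"
| "of_bits (b # bs) = of_bool b + 2 * of_bits bs"

lemma length_to_bits [simp]: "length (to_bits w x) = w"
  by (induction w arbitrary: x) auto

lemma of_bits_to_bits: "x < 2 ^ w \<Longrightarrow> of_bits (to_bits w x) = x"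
  by (induction w arbitrary: x) auto

function blocks :: "nat \<Rightarrow> bool list \<Rightarrow> bool list list" where
  "blocks w bs = (if w = 0 \<or> bs = [] then [] else take w bs # blocks w (drop w bs))"
  by auto
termination
  by (relation "Wellfounded.measure (\<lambda>(w, bs). length bs)") auto

declare blocks.simps [simp del]

lemma blocks_concat:
  "0 < w \<Longrightarrow> \<forall>b\<in>set bss. length b = w \<Longrightarrow> blocks w (concat bss) = bss"
  by (induction bss) (auto simp: blocks.simps)

definition encode_hashes :: "(bool \<times> bool list) list \<Rightarrow> bool list" where
  "encode_hashes hs = concat (map (\<lambda>(b, a). b # a) hs)"

definition decode_hashes :: "nat \<Rightarrow> bool list \<Rightarrow> (bool \<times> bool list) list" where
  "decode_hashes w \<sigma> = map (\<lambda>bs. (hd bs, tl bs)) (blocks (Suc w) \<sigma>)"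

lemma decode_encode_hashes:
  assumes "\<forall>(b, a) \<in> set hs. length a = w"
  shows "decode_hashes w (encode_hashes hs) = hs"
proof -
  have "blocks (Suc w) (encode_hashes hs) = map (\<lambda>(b, a). b # a) hs"
    unfolding encode_hashes_def using assms by (intro blocks_concat) auto
  then show ?thesis
    by (simp add: decode_hashes_def comp_def case_prod_unfold)
qed

lemma length_encode_hashes:
  assumes "\<forall>(b, a) \<in> set hs. length a = w"
  shows "length (encode_hashes hs) = length hs * Suc w"
  using assms by (induction hs) (auto simp: encode_hashes_def)

definition transcript_cost :: "transcript \<Rightarrow> nat" where
  "transcript_cost t = (\<Sum>(a, m, r) \<leftarrow> t. 1 + length m + length r)"

lemma transcript_cost_append [simp]:
  "transcript_cost (t @ t') = transcript_cost t + transcript_cost t'"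
  by (simp add: transcript_cost_def)

lemma comm_cost_eq_transcript_cost:
  "comm_cost P \<alpha> X rs = transcript_cost (final_transcript P \<alpha> X rs)"
  by (simp add: comm_cost_def transcript_cost_def)

lemma final_transcript_eqI:
  assumes coordinator: "\<And>j. j < length L \<Longrightarrow>
      coord_act P (X 0) (rs 0) (take j L) = Some (fst (L ! j), fst (snd (L ! j)))"
    and servers: "\<And>a m r. (a, m, r) \<in> set L \<Longrightarrow>
      0 < a \<and> a < \<alpha> \<and> (\<forall>v. server_reply P a (X a) (rs a) v m = r)"
    and halts: "coord_act P (X 0) (rs 0) L = None"
    and "length L \<le> steps P"
  shows "final_transcript P \<alpha> X rs = L"
proof -
  have "exec P \<alpha> X rs s (take j L) = L" if "length L - j \<le> s" "j \<le> length L" for s j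
    using that
  proof (induction s arbitrary: j)
    case (Suc s)
    show ?case
    proof (cases "j = length L")
      case False
      with Suc.prems have "j < length L"
        by simp
      obtain a m r where e: "L ! j = (a, m, r)"
        by (metis prod.exhaust)
      with \<open>j < length L\<close> have "take (Suc j) L = take j L @ [(a, m, r)]" "(a, m, r) \<in> set L"
        by (auto simp: take_Suc_conv_app_nth dest: nth_mem[of j L])
      then have "exec P \<alpha> X rs (Suc s) (take j L) = exec P \<alpha> X rs s (take (Suc j) L)"
        using coordinator[OF \<open>j < length L\<close>] servers e by simp
      also have "\<dots> = L"
        using Suc.IH[of "Suc j"] Suc.prems \<open>j < length L\<close> by simp
      finally show ?thesis .
    qed (use halts in simp)
  qed simp
  from this[of 0 "steps P"] show ?thesis
    using assms(4) by (simp add: final_transcript_def)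
qed

section \<open>The sampling protocol\<close>

locale distinct_sampling =
  fixes n \<alpha> :: nat and \<epsilon> :: real and C :: nat
  assumes n_pos: "0 < n" and \<alpha>_pos: "0 < \<alpha>" and \<epsilon>_pos: "0 < \<epsilon>"
begin

definition width :: nat where
  "width = nat \<lceil>log 2 (real n + 1)\<rceil>"

definition log_scale :: real where
  "log_scale = log 2 (real n + real \<alpha> + 1 / \<epsilon> + 1)"

definition max_level :: nat where
  "max_level = nat \<lceil>2 * log_scale\<rceil>"

text \<open>The sampling rate is \<open>2 ^ - level S\<close>.  Minimality keeps the expected sample
  \<open>S / 2 ^ level S\<close> below \<open>96 C / (\<epsilon>\<^sup>2 S)\<close> unless the level is capped, while
  \<open>2 ^ level S * 48 * C \<le> \<epsilon>\<^sup>2 S\<^sup>2\<close> at positive levels is what Chebyshev's bound needs.\<close>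
definition level :: "nat \<Rightarrow> nat" where
  "level S = (LEAST k. k = max_level \<or> \<epsilon>\<^sup>2 * (real S)\<^sup>2 < 2 ^ (k + 1) * 48 * real C)"

text \<open>Six times the expected number of sampled elements counted with multiplicity.\<close>
definition budget :: "nat \<Rightarrow> real" where
  "budget S = 6 * real S / 2 ^ level S"

text \<open>
  The protocol runs in three rounds, server \<open>a\<close> being addressed in the \<open>a\<close>-th exchange of
  each round: on message \<open>[]\<close> it reports \<open>|X a|\<close>; on \<open>True # \<sigma>\<close>, where \<open>\<sigma>\<close> encodes the first
  \<open>level S\<close> hashes of the coordinator's seed, the number of its elements surviving them; on
  \<open>False # \<sigma>\<close> the surviving elements themselves.  The coordinator skips the third round
  if the survivors exceed the budget.
\<close>
definition sample_of :: "bool list \<Rightarrow> nat set" where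
  "sample_of \<sigma> = {x. survives (decode_hashes width \<sigma>) x}"

definition elements_reply :: "nat set \<Rightarrow> bool list" where
  "elements_reply A = concat (map (to_bits width) (sorted_list_of_set A))"

definition server :: "nat \<Rightarrow> nat set \<Rightarrow> nat \<Rightarrow> (bool list \<times> bool list) list \<Rightarrow> bool list \<Rightarrow> bool list" where
  "server a Xa r v m = (case m of
       [] \<Rightarrow> to_bits width (card Xa)
     | True # \<sigma> \<Rightarrow> to_bits width (card (Xa \<inter> sample_of \<sigma>))
     | False # \<sigma> \<Rightarrow> elements_reply (Xa \<inter> sample_of \<sigma>))"

definition reply_value :: "nat \<times> bool list \<times> bool list \<Rightarrow> nat" where
  "reply_value e = of_bits (snd (snd e))"

definition reply_elements :: "nat \<times> bool list \<times> bool list \<Rightarrow> nat set" where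
  "reply_elements e = of_bits ` set (blocks width (snd (snd e)))"

definition parsed_size :: "nat set \<Rightarrow> transcript \<Rightarrow> nat" where
  "parsed_size X0 t = card X0 + sum_list (map reply_value (take (\<alpha> - 1) t))"

definition parsed_count :: "nat set \<Rightarrow> bool list \<Rightarrow> transcript \<Rightarrow> nat" where
  "parsed_count X0 \<sigma> t =
     card (X0 \<inter> sample_of \<sigma>) + sum_list (map reply_value (take (\<alpha> - 1) (drop (\<alpha> - 1) t)))"

definition coordinator :: "nat set \<Rightarrow> nat \<Rightarrow> transcript \<Rightarrow> (nat \<times> bool list) option" where
  "coordinator X0 s t =
    (let S = parsed_size X0 t; \<sigma> = encode_hashes (take (level S) (from_nat s)); i = length t in
     if i < \<alpha> - 1 then Some (i + 1, [])
     else if i < 2 * (\<alpha> - 1) then Some (i - (\<alpha> - 1) + 1, True # \<sigma>)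
     else if budget S < parsed_count X0 \<sigma> t then None
     else if i < 3 * (\<alpha> - 1) then Some (i - 2 * (\<alpha> - 1) + 1, False # \<sigma>)
     else None)"

text \<open>\<open>N - |E|\<close> counts the repeated survivors.  After an abort the output is the
  junk value \<open>0\<close>.\<close>
definition estimate :: "nat set \<Rightarrow> nat \<Rightarrow> transcript \<Rightarrow> real" where
  "estimate X0 s t =
    (let S = parsed_size X0 t; k = level S; \<sigma> = encode_hashes (take k (from_nat s));
         N = parsed_count X0 \<sigma> t;
         E = (X0 \<inter> sample_of \<sigma>) \<union> (\<Union>e \<in> set (drop (2 * (\<alpha> - 1)) t). reply_elements e) in
     if budget S < N then 0 else real S - 2 ^ k * (real N - real (card E)))"

definition protocol :: protocol where
  "protocol = \<lparr>steps = 3 * \<alpha>,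
     rnd = (\<lambda>a. if a = 0 then map_pmf to_nat (replicate_pmf max_level (hash_pmf width)) else return_pmf 0),
     coord_act = coordinator, server_reply = server, out = estimate\<rparr>"

lemma protocol_simps [simp]:
  "steps protocol = 3 * \<alpha>"
  "rnd protocol = (\<lambda>a. if a = 0 then map_pmf to_nat (replicate_pmf max_level (hash_pmf width)) else return_pmf 0)"
  "coord_act protocol = coordinator" "server_reply protocol = server" "out protocol = estimate"
  by (simp_all add: protocol_def)

lemma budget_nonneg: "0 \<le> budget S"
  by (simp add: budget_def)

lemma level_le_max_level: "level S \<le> max_level"
  unfolding level_def by (rule Least_le) simp

lemma level_less_max_level_imp:
  "level S < max_level \<Longrightarrow> \<epsilon>\<^sup>2 * (real S)\<^sup>2 < 2 ^ (level S + 1) * 48 * real C"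
  unfolding level_def by (metis (mono_tags, lifting) LeastI nat_less_le)

lemma level_pos_imp:
  assumes "1 \<le> level S"
  shows "2 ^ level S * 48 * real C \<le> \<epsilon>\<^sup>2 * (real S)\<^sup>2"
proof -
  have "\<not> (level S - 1 = max_level \<or> \<epsilon>\<^sup>2 * (real S)\<^sup>2 < 2 ^ (level S - 1 + 1) * 48 * real C)"
    unfolding level_def by (rule not_less_Least) (use assms in \<open>simp add: level_def\<close>)
  then show ?thesis
    using assms by simp
qed

lemma less_two_power_width: "n < 2 ^ width"
proof -
  have "real n + 1 = 2 powr (log 2 (real n + 1))"
    by simp
  also have "\<dots> \<le> 2 powr (real width)"
    unfolding width_def by (intro powr_mono) (simp_all add: real_nat_ceiling_ge)
  finally have "real (n + 1) \<le> real (2 ^ width)"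
    by (simp add: powr_realpow)
  then show ?thesis
    by linarith
qed

lemma width_pos: "0 < width"
  using less_two_power_width n_pos by (cases width) auto

lemma one_le_log_scale: "1 \<le> log_scale"
proof -
  have "1 \<le> real n" "0 < 1 / \<epsilon>"
    using n_pos \<epsilon>_pos by auto
  then have "2 \<le> real n + real \<alpha> + 1 / \<epsilon> + 1"
    by linarith
  then have "log 2 2 \<le> log_scale"
    unfolding log_scale_def by (subst log_le_cancel_iff) auto
  then show ?thesis
    by simp
qed

lemma one_le_log_n: "1 \<le> log 2 (real n + 1)"
proof -
  have "log 2 2 \<le> log 2 (real n + 1)"
    using n_pos by (subst log_le_cancel_iff) auto
  then show ?thesis
    by simp
qed

lemma width_le: "real width \<le> log 2 (real n + 1) + 1"
  using one_le_log_n unfolding width_def by linarith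

lemma max_level_le: "real max_level \<le> 2 * log_scale + 1"
  using one_le_log_scale unfolding max_level_def by linarith

lemma alpha_times_n_le_two_power_max_level: "real \<alpha> * real n \<le> 2 ^ max_level"
proof -
  let ?x = "real n + real \<alpha> + 1 / \<epsilon> + 1"
  have "0 < 1 / \<epsilon>"
    using \<epsilon>_pos by simp
  then have "0 < ?x"
    by linarith
  moreover have "real \<alpha> * real n \<le> ?x * ?x"
    using \<open>0 < 1 / \<epsilon>\<close> by (intro mult_mono) auto
  moreover have "2 powr log_scale = ?x"
    unfolding log_scale_def using \<open>0 < ?x\<close> by simp
  ultimately have "real \<alpha> * real n \<le> 2 powr log_scale * 2 powr log_scale"
    by simp
  also have "\<dots> = 2 powr (2 * log_scale)"
    by (simp add: powr_add[symmetric])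
  also have "\<dots> \<le> 2 powr (real max_level)"
    unfolding max_level_def by (intro powr_mono) (simp_all add: real_nat_ceiling_ge)
  also have "\<dots> = 2 ^ max_level"
    by (simp add: powr_realpow)
  finally show ?thesis .
qed

lemma exchange_overhead_le: "real (2 + width + max_level * Suc width) \<le> 16 * log_scale * log 2 (real n + 1)"
proof -
  let ?l = "log 2 (real n + 1)"
  have "real max_level * (real width + 1) \<le> (2 * log_scale + 1) * (?l + 2)"
    using max_level_le width_le by (intro mult_mono) auto
  then have "real (2 + width + max_level * Suc width) \<le> 2 + (?l + 1) + (2 * log_scale + 1) * (?l + 2)"
    using width_le by (simp add: algebra_simps)
  also have "\<dots> = 3 + ?l + 2 * (log_scale * ?l) + 4 * log_scale + ?l + 2"
    by (simp add: algebra_simps)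
  also have "\<dots> \<le> 16 * log_scale * ?l"
  proof -
    have "log_scale \<le> log_scale * ?l" "?l \<le> log_scale * ?l"
      using one_le_log_scale one_le_log_n mult_left_mono[of 1 ?l log_scale] mult_right_mono[of 1 log_scale ?l]
      by auto
    then show ?thesis
      using one_le_log_scale by linarith
  qed
  finally show ?thesis .
qed

definition exchange_round :: "bool list \<Rightarrow> (nat \<Rightarrow> bool list) \<Rightarrow> transcript" where
  "exchange_round m r = map (\<lambda>a. (a, m, r a)) [1..<\<alpha>]"

lemma length_exchange_round [simp]: "length (exchange_round m r) = \<alpha> - 1"
  by (simp add: exchange_round_def)

lemma nth_exchange_round: "j < \<alpha> - 1 \<Longrightarrow> exchange_round m r ! j = (j + 1, m, r (j + 1))"
  by (simp add: exchange_round_def add.commute)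

lemma reply_values_exchange_round:
  "(\<And>a. a < \<alpha> \<Longrightarrow> f a < 2 ^ width) \<Longrightarrow>
    map reply_value (exchange_round m (\<lambda>a. to_bits width (f a))) = map f [1..<\<alpha>]"
  by (simp add: exchange_round_def reply_value_def of_bits_to_bits)

lemma sum_list_upt_eq_sum: "f 0 + sum_list (map f [1..<\<alpha>]) = (\<Sum>a<\<alpha>. f a)"
  using \<alpha>_pos by (simp add: sum_set_upt_conv_sum_list_nat[symmetric] lessThan_atLeast0 sum.atLeast_Suc_lessThan)

definition message :: "(nat \<Rightarrow> nat set) \<Rightarrow> (bool \<times> bool list) list \<Rightarrow> bool list" where
  "message X hs = encode_hashes (take (level (total_size \<alpha> X)) hs)"

definition sample_count :: "(nat \<Rightarrow> nat set) \<Rightarrow> bool list \<Rightarrow> nat" where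
  "sample_count X \<sigma> = (\<Sum>a<\<alpha>. card (X a \<inter> sample_of \<sigma>))"

definition honest_transcript :: "(nat \<Rightarrow> nat set) \<Rightarrow> (bool \<times> bool list) list \<Rightarrow> transcript" where
  "honest_transcript X hs =
    (let \<sigma> = message X hs in
     exchange_round [] (\<lambda>a. to_bits width (card (X a)))
     @ exchange_round (True # \<sigma>) (\<lambda>a. to_bits width (card (X a \<inter> sample_of \<sigma>)))
     @ (if budget (total_size \<alpha> X) < sample_count X \<sigma> then []
        else exchange_round (False # \<sigma>) (\<lambda>a. elements_reply (X a \<inter> sample_of \<sigma>))))"

context
  fixes X :: "nat \<Rightarrow> nat set"
  assumes inputs: "\<forall>a<\<alpha>. X a \<subseteq> {..<n}"
begin

lemma finite_input: "a < \<alpha> \<Longrightarrow> finite (X a)"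
  using inputs finite_subset by blast

lemma card_input_Int_le: "a < \<alpha> \<Longrightarrow> card (X a \<inter> A) \<le> n"
  using inputs card_mono[of "{..<n}" "X a \<inter> A"] by auto

lemma card_input_Int_less: "a < \<alpha> \<Longrightarrow> card (X a \<inter> A) < 2 ^ width"
  using card_input_Int_le less_two_power_width by (meson le_less_trans)

lemma card_input_less: "a < \<alpha> \<Longrightarrow> card (X a) < 2 ^ width"
  using card_input_Int_less[of a UNIV] by simp

lemma reply_elements_elements_reply:
  assumes "a < \<alpha>"
  shows "reply_elements (a', m, elements_reply (X a \<inter> A)) = X a \<inter> A"
proof -
  have "finite (X a \<inter> A)"
    using finite_input[OF assms] by simp
  moreover have "x < 2 ^ width" if "x \<in> X a \<inter> A" for x
    using that inputs assms less_two_power_width by force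
  ultimately show ?thesis
    using width_pos by (simp add: reply_elements_def elements_reply_def blocks_concat image_image of_bits_to_bits)
qed

lemma parsed_size_honest:
  assumes "\<alpha> - 1 \<le> j"
  shows "parsed_size (X 0) (take j (honest_transcript X hs)) = total_size \<alpha> X"
proof -
  have "take (\<alpha> - 1) (take j (honest_transcript X hs)) = exchange_round [] (\<lambda>a. to_bits width (card (X a)))"
    using assms by (simp add: honest_transcript_def Let_def min_def)
  then show ?thesis
    using card_input_less sum_list_upt_eq_sum[of "\<lambda>a. card (X a)"]
    by (simp add: parsed_size_def reply_values_exchange_round total_size_def)
qed

lemma parsed_count_honest:
  assumes "2 * (\<alpha> - 1) \<le> j"
  shows "parsed_count (X 0) (message X hs) (take j (honest_transcript X hs)) = sample_count X (message X hs)"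
proof -
  let ?\<sigma> = "message X hs"
  have "take (\<alpha> - 1) (drop (\<alpha> - 1) (take j (honest_transcript X hs)))
      = exchange_round (True # ?\<sigma>) (\<lambda>a. to_bits width (card (X a \<inter> sample_of ?\<sigma>)))"
    using assms by (simp add: honest_transcript_def Let_def min_def)
  then show ?thesis
    using card_input_Int_less sum_list_upt_eq_sum[of "\<lambda>a. card (X a \<inter> sample_of ?\<sigma>)"]
    by (simp add: parsed_count_def reply_values_exchange_round sample_count_def)
qed

lemma length_honest_transcript:
  "length (honest_transcript X hs) = 2 * (\<alpha> - 1)
     + (if budget (total_size \<alpha> X) < sample_count X (message X hs) then 0 else \<alpha> - 1)"
  by (simp add: honest_transcript_def Let_def)

lemma honest_transcript_header:
  assumes "j < length (honest_transcript X hs)"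
  shows "(fst (honest_transcript X hs ! j), fst (snd (honest_transcript X hs ! j))) =
    (if j < \<alpha> - 1 then (j + 1, [])
     else if j < 2 * (\<alpha> - 1) then (j - (\<alpha> - 1) + 1, True # message X hs)
     else (j - 2 * (\<alpha> - 1) + 1, False # message X hs))"
proof -
  let ?\<sigma> = "message X hs"
  obtain R1 R2 R3 where L: "honest_transcript X hs = R1 @ R2 @ R3"
    and R1: "R1 = exchange_round [] (\<lambda>a. to_bits width (card (X a)))"
    and R2: "R2 = exchange_round (True # ?\<sigma>) (\<lambda>a. to_bits width (card (X a \<inter> sample_of ?\<sigma>)))"
    and R3: "R3 = [] \<or> R3 = exchange_round (False # ?\<sigma>) (\<lambda>a. elements_reply (X a \<inter> sample_of ?\<sigma>))"
    by (simp add: honest_transcript_def Let_def)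
  have "length R1 = \<alpha> - 1" "length R2 = \<alpha> - 1" "length R3 \<le> \<alpha> - 1"
    using R1 R2 R3 by auto
  consider "j < \<alpha> - 1" | "\<alpha> - 1 \<le> j" "j < 2 * (\<alpha> - 1)" | "2 * (\<alpha> - 1) \<le> j"
    by linarith
  then show ?thesis
  proof cases
    case 1
    then show ?thesis
      using \<open>length R1 = \<alpha> - 1\<close> by (simp add: L R1 nth_append nth_exchange_round)
  next
    case 2
    then have "j - (\<alpha> - 1) < \<alpha> - 1"
      by linarith
    then have "honest_transcript X hs ! j = R2 ! (j - (\<alpha> - 1))"
      using 2 \<open>length R1 = \<alpha> - 1\<close> \<open>length R2 = \<alpha> - 1\<close> by (simp add: L nth_append)
    with \<open>j - (\<alpha> - 1) < \<alpha> - 1\<close> show ?thesis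
      using 2 by (simp add: R2 nth_exchange_round)
  next
    case 3
    have "length (R1 @ R2) = 2 * (\<alpha> - 1)"
      using \<open>length R1 = \<alpha> - 1\<close> \<open>length R2 = \<alpha> - 1\<close> by simp
    then have "honest_transcript X hs ! j = R3 ! (j - 2 * (\<alpha> - 1))" "j - 2 * (\<alpha> - 1) < length R3"
      using 3 assms unfolding L append_assoc[symmetric] nth_append by auto
    moreover from this have "R3 = exchange_round (False # ?\<sigma>) (\<lambda>a. elements_reply (X a \<inter> sample_of ?\<sigma>))"
      using R3 by auto
    ultimately show ?thesis
      using 3 by (simp add: nth_exchange_round)
  qed
qed

lemma coordinator_honest:
  assumes "from_nat s = hs" and j: "j < length (honest_transcript X hs)"
  shows "coordinator (X 0) s (take j (honest_transcript X hs))
    = Some (fst (honest_transcript X hs ! j), fst (snd (honest_transcript X hs ! j)))"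
proof -
  have \<sigma>: "encode_hashes (take (level (total_size \<alpha> X)) (from_nat s)) = message X hs"
    using assms(1) by (simp add: message_def)
  have "2 * (\<alpha> - 1) \<le> j \<Longrightarrow> \<not> budget (total_size \<alpha> X) < sample_count X (message X hs) \<and> j < 3 * (\<alpha> - 1)"
    using j length_honest_transcript[of hs] by (auto split: if_splits)
  then show ?thesis
    using j honest_transcript_header[OF j] parsed_size_honest[of j hs] parsed_count_honest[of j hs] \<sigma>
    by (auto simp: coordinator_def Let_def)
qed

lemma coordinator_honest_halts:
  assumes "from_nat s = hs"
  shows "coordinator (X 0) s (honest_transcript X hs) = None"
  using parsed_size_honest[of "length (honest_transcript X hs)" hs]
    parsed_count_honest[of "length (honest_transcript X hs)" hs]
    length_honest_transcript[of hs] assms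
  by (simp add: coordinator_def message_def Let_def split: if_splits)

lemma server_honest:
  assumes "(a, m, r) \<in> set (honest_transcript X hs)"
  shows "0 < a \<and> a < \<alpha> \<and> (\<forall>v s. server a (X a) s v m = r)"
  using assms by (auto simp: honest_transcript_def Let_def exchange_round_def server_def split: if_splits)

lemma final_transcript_protocol:
  "final_transcript protocol \<alpha> X rs = honest_transcript X (from_nat (rs 0))"
proof (rule final_transcript_eqI)
  show "length (honest_transcript X (from_nat (rs 0))) \<le> steps protocol"
    using length_honest_transcript by auto
qed (use coordinator_honest coordinator_honest_halts server_honest in auto)

lemma estimate_honest:
  assumes "from_nat s = hs" and continue: "\<not> budget (total_size \<alpha> X) < sample_count X (message X hs)"
  shows "estimate (X 0) s (honest_transcript X hs) = real (total_size \<alpha> X)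
    - 2 ^ level (total_size \<alpha> X) * (real (sample_count X (message X hs))
       - real (card ((\<Union>a<\<alpha>. X a) \<inter> sample_of (message X hs))))"
proof -
  let ?L = "honest_transcript X hs"
  let ?T = "sample_of (message X hs)"
  have "2 * (\<alpha> - 1) \<le> length ?L"
    by (simp add: length_honest_transcript)
  then have parsed: "parsed_size (X 0) ?L = total_size \<alpha> X"
      "parsed_count (X 0) (message X hs) ?L = sample_count X (message X hs)"
    using parsed_size_honest[of "length ?L" hs] parsed_count_honest[of "length ?L" hs] by auto
  have "drop (2 * (\<alpha> - 1)) ?L = exchange_round (False # message X hs) (\<lambda>a. elements_reply (X a \<inter> ?T))"
    using continue by (simp add: honest_transcript_def Let_def)
  then have "(\<Union>e \<in> set (drop (2 * (\<alpha> - 1)) ?L). reply_elements e) = (\<Union>a\<in>{1..<\<alpha>}. X a \<inter> ?T)"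
    by (simp add: exchange_round_def reply_elements_elements_reply)
  moreover have "X 0 \<inter> ?T \<union> (\<Union>a\<in>{1..<\<alpha>}. X a \<inter> ?T) = (\<Union>a<\<alpha>. X a) \<inter> ?T"
    using \<alpha>_pos by (auto simp: atLeast1_lessThan_eq_remove0)
  ultimately show ?thesis
    using continue parsed assms(1) by (simp add: estimate_def message_def Let_def)
qed

lemma length_elements_reply: "a < \<alpha> \<Longrightarrow> length (elements_reply (X a \<inter> A)) = width * card (X a \<inter> A)"
  using finite_input[of a] by (simp add: elements_reply_def length_concat comp_def sum_list_triv)

lemma length_message:
  assumes "hs \<in> set_pmf (replicate_pmf max_level (hash_pmf width))"
  shows "length (message X hs) \<le> max_level * Suc width"
proof -
  have "\<forall>(b, a) \<in> set (take (level (total_size \<alpha> X)) hs). length a = width"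
    using assms by (auto simp: set_replicate_pmf dest!: in_set_takeD length_in_set_hash_pmf)
  moreover have "length hs = max_level"
    using assms by (simp add: set_replicate_pmf)
  moreover have "length (take (level (total_size \<alpha> X)) hs) * Suc width \<le> max_level * Suc width"
    using level_le_max_level \<open>length hs = max_level\<close> by (intro mult_right_mono) auto
  ultimately show ?thesis
    by (simp only: message_def length_encode_hashes)
qed

lemma transcript_cost_exchange_round:
  "transcript_cost (exchange_round m r) = (\<Sum>a = 1..<\<alpha>. 1 + length m + length (r a))"
  by (simp add: transcript_cost_def exchange_round_def sum_list_distinct_conv_sum_set comp_def)

lemma transcript_cost_elements_round:
  "transcript_cost (exchange_round (False # \<sigma>) (\<lambda>a. elements_reply (X a \<inter> sample_of \<sigma>)))
    \<le> (\<alpha> - 1) * (2 + length \<sigma>) + width * sample_count X \<sigma>"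
proof -
  have "transcript_cost (exchange_round (False # \<sigma>) (\<lambda>a. elements_reply (X a \<inter> sample_of \<sigma>)))
      = (\<Sum>a = 1..<\<alpha>. (2 + length \<sigma>) + width * card (X a \<inter> sample_of \<sigma>))"
    unfolding transcript_cost_exchange_round by (intro sum.cong refl) (simp add: length_elements_reply)
  also have "\<dots> = (\<alpha> - 1) * (2 + length \<sigma>) + width * (\<Sum>a = 1..<\<alpha>. card (X a \<inter> sample_of \<sigma>))"
    by (simp only: sum.distrib sum_distrib_left sum_constant card_atLeastLessThan of_nat_id distrib_left)
  also have "\<dots> \<le> (\<alpha> - 1) * (2 + length \<sigma>) + width * sample_count X \<sigma>"
    unfolding sample_count_def by (intro add_left_mono mult_left_mono sum_mono2) auto
  finally show ?thesis .
qed

lemma cost_honest: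
  assumes "hs \<in> set_pmf (replicate_pmf max_level (hash_pmf width))"
  shows "real (transcript_cost (honest_transcript X hs))
    \<le> (3 * real \<alpha> + budget (total_size \<alpha> X)) * real (2 + width + max_level * Suc width)"
proof -
  let ?\<sigma> = "message X hs"
  let ?N = "sample_count X ?\<sigma>"
  define B where "B = 2 + width + max_level * Suc width"
  have \<sigma>: "2 + length ?\<sigma> + width \<le> B"
    using length_message[OF assms] by (simp add: B_def)
  have "(\<alpha> - 1) * B \<le> \<alpha> * B"
    by (simp add: mult_right_mono)
  have "transcript_cost (exchange_round [] (\<lambda>a. to_bits width (card (X a)))) \<le> (\<alpha> - 1) * B"
    using \<sigma> sum_bounded_above[of "{1..<\<alpha>}" "\<lambda>a. 1 + width" B] by (simp add: transcript_cost_exchange_round)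
  with \<open>(\<alpha> - 1) * B \<le> \<alpha> * B\<close>
  have round1: "transcript_cost (exchange_round [] (\<lambda>a. to_bits width (card (X a)))) \<le> \<alpha> * B"
    by linarith
  have "transcript_cost (exchange_round (True # ?\<sigma>) (\<lambda>a. to_bits width (card (X a \<inter> sample_of ?\<sigma>))))
      \<le> (\<alpha> - 1) * B"
    using \<sigma> sum_bounded_above[of "{1..<\<alpha>}" "\<lambda>a. 2 + length ?\<sigma> + width" B]
    by (simp add: transcript_cost_exchange_round)
  with \<open>(\<alpha> - 1) * B \<le> \<alpha> * B\<close>
  have round2: "transcript_cost (exchange_round (True # ?\<sigma>) (\<lambda>a. to_bits width (card (X a \<inter> sample_of ?\<sigma>))))
      \<le> \<alpha> * B"
    by linarith
  have "(\<alpha> - 1) * (2 + length ?\<sigma>) \<le> \<alpha> * B"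
    using \<sigma> by (intro mult_mono) auto
  then have round3: "transcript_cost (exchange_round (False # ?\<sigma>) (\<lambda>a. elements_reply (X a \<inter> sample_of ?\<sigma>)))
      \<le> \<alpha> * B + width * ?N"
    using transcript_cost_elements_round[of ?\<sigma>] by linarith
  have "real (transcript_cost (honest_transcript X hs))
      \<le> 3 * real \<alpha> * real B + (if budget (total_size \<alpha> X) < ?N then 0 else real width * real ?N)"
  proof (cases "budget (total_size \<alpha> X) < ?N")
    case True
    then have "transcript_cost (honest_transcript X hs) \<le> 3 * (\<alpha> * B)"
      using round1 round2 by (simp add: honest_transcript_def Let_def)
    then have "real (transcript_cost (honest_transcript X hs)) \<le> real (3 * (\<alpha> * B))"
      by (rule of_nat_mono)
    with True show ?thesis
      by simp
  next
    case False
    then have "transcript_cost (honest_transcript X hs) \<le> 3 * (\<alpha> * B) + width * ?N"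
      using round1 round2 round3 by (simp add: honest_transcript_def Let_def)
    then have "real (transcript_cost (honest_transcript X hs)) \<le> real (3 * (\<alpha> * B) + width * ?N)"
      by (rule of_nat_mono)
    with False show ?thesis
      by simp
  qed
  also have "\<dots> \<le> 3 * real \<alpha> * real B + real B * budget (total_size \<alpha> X)"
    using \<sigma> budget_nonneg[of "total_size \<alpha> X"] by (auto intro!: mult_mono)
  finally show ?thesis
    by (simp add: B_def algebra_simps)
qed

lemma sample_of_message:
  assumes "hs \<in> set_pmf (replicate_pmf max_level (hash_pmf width))"
  shows "sample_of (message X hs) = sampled (level (total_size \<alpha> X)) hs"
proof -
  have "\<forall>(b, a) \<in> set (take (level (total_size \<alpha> X)) hs). length a = width"
    using assms by (auto simp: set_replicate_pmf dest!: in_set_takeD length_in_set_hash_pmf)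
  then show ?thesis
    by (simp add: sample_of_def message_def sampled_def decode_encode_hashes)
qed

lemma sample_count_message:
  assumes "hs \<in> set_pmf (replicate_pmf max_level (hash_pmf width))"
  shows "real (sample_count X (message X hs)) = (\<Sum>i\<in>(\<Union>a<\<alpha>. X a).
     real (occurrences \<alpha> X i) * indicator (sampled (level (total_size \<alpha> X)) hs) i)"
proof -
  have "sample_count X (message X hs)
      = (\<Sum>i\<in>(\<Union>a<\<alpha>. X a) \<inter> sampled (level (total_size \<alpha> X)) hs. occurrences \<alpha> X i)"
    using sum_card_Int_eq_sum_occurrences finite_input sample_of_message[OF assms]
    by (simp add: sample_count_def)
  then show ?thesis
    using finite_input by (simp add: sum.inter_restrict indicator_def of_bool_def if_distrib cong: if_cong)
qed

lemma honest_estimate_eq: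
  assumes "hs \<in> set_pmf (replicate_pmf max_level (hash_pmf width))"
  defines "k \<equiv> level (total_size \<alpha> X)"
  shows "real (total_size \<alpha> X) - 2 ^ k * (real (sample_count X (message X hs))
       - real (card ((\<Union>a<\<alpha>. X a) \<inter> sample_of (message X hs))))
    = real (F0 \<alpha> X) - 2 ^ k * (\<Sum>i\<in>(\<Union>a<\<alpha>. X a).
        (real (occurrences \<alpha> X i) - 1) * (indicator (sampled k hs) i - (1 / 2) ^ k))"
proof -
  let ?U = "\<Union>a<\<alpha>. X a"
  let ?Z = "\<lambda>i. indicator (sampled k hs) i :: real"
  let ?o = "\<lambda>i. real (occurrences \<alpha> X i)"
  let ?p = "(1 / 2 :: real) ^ k"
  have "finite ?U"
    using finite_input by blast
  have card: "real (card (?U \<inter> sample_of (message X hs))) = (\<Sum>i\<in>?U. ?Z i)"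
    using \<open>finite ?U\<close> sample_of_message[OF assms(1)]
    by (simp add: k_def indicator_def of_bool_def sum.If_cases Int_def)
  have size: "real (total_size \<alpha> X) = (\<Sum>i\<in>?U. ?o i)"
    using total_size_eq_sum_occurrences finite_input by simp
  have "(\<Sum>i\<in>?U. (?o i - 1) * (?Z i - ?p))
      = (\<Sum>i\<in>?U. ?o i * ?Z i) - (\<Sum>i\<in>?U. ?Z i) - ?p * ((\<Sum>i\<in>?U. ?o i) - card ?U)"
    by (simp add: algebra_simps sum_subtractf sum.distrib sum_distrib_left)
  also have "\<dots> = (real (sample_count X (message X hs)) - real (card (?U \<inter> sample_of (message X hs))))
      - ?p * (real (total_size \<alpha> X) - real (F0 \<alpha> X))"
    by (simp only: card size sample_count_message[OF assms(1)] k_def F0_def)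
  finally have "2 ^ k * (\<Sum>i\<in>?U. (?o i - 1) * (?Z i - ?p))
      = 2 ^ k * (real (sample_count X (message X hs)) - real (card (?U \<inter> sample_of (message X hs))))
        - (2 ^ k * ?p) * (real (total_size \<alpha> X) - real (F0 \<alpha> X))"
    by (simp add: right_diff_distrib)
  moreover have "(2::real) ^ k * ?p = 1"
    by (simp add: power_mult_distrib[symmetric])
  ultimately show ?thesis
    by simp
qed

lemma sample_count_le_total_size: "sample_count X \<sigma> \<le> total_size \<alpha> X"
  unfolding sample_count_def total_size_def
  by (intro sum_mono card_mono) (auto simp: finite_input)

lemma prob_abort_le:
  "measure_pmf.prob (replicate_pmf max_level (hash_pmf width))
     {hs. budget (total_size \<alpha> X) < sample_count X (message X hs)} \<le> 1 / 6"
proof (cases "total_size \<alpha> X = 0")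
  case True
  then show ?thesis
    using sample_count_le_total_size by (simp add: budget_def)
next
  case False
  let ?M = "replicate_pmf max_level (hash_pmf width)"
  let ?S = "total_size \<alpha> X"
  let ?k = "level ?S"
  let ?U = "\<Union>a<\<alpha>. X a"
  have "budget ?S = 6 * (1 / 2) ^ ?k * real ?S"
    by (simp add: budget_def power_one_over)
  have "measure_pmf.prob ?M {hs. budget ?S < sample_count X (message X hs)}
      = measure_pmf.prob ?M ({hs. budget ?S < sample_count X (message X hs)} \<inter> set_pmf ?M)"
    by (simp add: measure_Int_set_pmf)
  also have "\<dots> \<le> measure_pmf.prob ?M
      {hs. budget ?S \<le> (\<Sum>i\<in>?U. real (occurrences \<alpha> X i) * indicator (sampled ?k hs) i)}"
    using sample_count_message by (intro measure_pmf.finite_measure_mono) auto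
  also have "\<dots> \<le> (1 / 2) ^ ?k * (\<Sum>i\<in>?U. real (occurrences \<alpha> X i)) / budget ?S"
    using False finite_input
    by (intro prob_sampled_weight_ge level_le_max_level) (auto simp: budget_def)
  also have "(\<Sum>i\<in>?U. real (occurrences \<alpha> X i)) = real ?S"
    using total_size_eq_sum_occurrences[of \<alpha> X] finite_input by simp
  also have "(1 / 2) ^ ?k * real ?S / budget ?S = 1 / 6"
    using False by (simp add: \<open>budget ?S = 6 * (1 / 2) ^ ?k * real ?S\<close>)
  finally show ?thesis .
qed

lemma excess_variance_le:
  assumes "collisions \<alpha> X \<le> C" "C \<le> F0 \<alpha> X"
  defines "k \<equiv> level (total_size \<alpha> X)"
  shows "(\<Sum>i\<in>(\<Union>a<\<alpha>. X a). (real (occurrences \<alpha> X i) - 1)\<^sup>2) * ((1 / 2) ^ k - (1 / 4) ^ k)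
    \<le> (\<epsilon> * real (F0 \<alpha> X) * (1 / 2) ^ k)\<^sup>2 / 6"
proof -
  let ?F = "real (F0 \<alpha> X)"
  let ?p = "(1 / 2 :: real) ^ k"
  have "(\<Sum>i\<in>(\<Union>a<\<alpha>. X a). (real (occurrences \<alpha> X i) - 1)\<^sup>2) * (?p - (1 / 4) ^ k) \<le> 2 * real C * (?p - ?p\<^sup>2)"
  proof (rule mult_mono)
    show "(\<Sum>i\<in>(\<Union>a<\<alpha>. X a). (real (occurrences \<alpha> X i) - 1)\<^sup>2) \<le> 2 * real C"
      using sum_occurrences_excess_square_le[of \<alpha> X] finite_input assms(1) by force
    show "?p - (1 / 4) ^ k \<le> ?p - ?p\<^sup>2"
      by (simp add: power2_eq_square power_mult_distrib[symmetric])
    show "0 \<le> ?p - (1 / 4) ^ k"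
      by (simp add: power_mono)
  qed simp
  also have "2 * real C * (?p - ?p\<^sup>2) \<le> (\<epsilon> * ?F * ?p)\<^sup>2 / 6"
  proof (cases "k = 0")
    case False
    have "total_size \<alpha> X \<le> 2 * F0 \<alpha> X"
      using total_size_le_F0_plus_collisions[of \<alpha> X] finite_input assms(1,2) by force
    then have "\<epsilon>\<^sup>2 * (real (total_size \<alpha> X))\<^sup>2 \<le> \<epsilon>\<^sup>2 * (2 * ?F)\<^sup>2"
      by (intro mult_left_mono power_mono) auto
    with level_pos_imp[of "total_size \<alpha> X"] False have "2 ^ k * 12 * real C \<le> \<epsilon>\<^sup>2 * ?F\<^sup>2"
      by (simp add: k_def power_mult_distrib)
    have "(2::real) ^ k * ?p = 1"
      by (simp add: power_mult_distrib[symmetric])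
    have "2 * real C * (?p - ?p\<^sup>2) \<le> 2 * real C * ?p"
      by (simp add: mult_left_mono)
    also have "\<dots> = (2 ^ k * 12 * real C) * ?p * ?p / 6"
      using \<open>2 ^ k * ?p = 1\<close> by (simp add: algebra_simps)
    also have "\<dots> \<le> (\<epsilon>\<^sup>2 * ?F\<^sup>2) * ?p * ?p / 6"
      using \<open>2 ^ k * 12 * real C \<le> \<epsilon>\<^sup>2 * ?F\<^sup>2\<close> by (intro divide_right_mono mult_right_mono) auto
    also have "\<dots> = (\<epsilon> * ?F * ?p)\<^sup>2 / 6"
      by (simp add: power2_eq_square)
    finally show ?thesis .
  qed simp
  finally show ?thesis .
qed

lemma prob_deviation_le:
  assumes "collisions \<alpha> X \<le> C" "C \<le> F0 \<alpha> X"
  defines "k \<equiv> level (total_size \<alpha> X)"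
  shows "measure_pmf.prob (replicate_pmf max_level (hash_pmf width))
     {hs. \<epsilon> * real (F0 \<alpha> X) * (1 / 2) ^ k < \<bar>\<Sum>i\<in>(\<Union>a<\<alpha>. X a).
        (real (occurrences \<alpha> X i) - 1) * (indicator (sampled k hs) i - (1 / 2) ^ k)\<bar>} \<le> 1 / 6"
proof (cases "F0 \<alpha> X = 0")
  case True
  then have "(\<Union>a<\<alpha>. X a) = {}"
    using finite_input by (simp add: F0_def)
  with True show ?thesis
    by simp
next
  case False
  let ?U = "\<Union>a<\<alpha>. X a"
  let ?p = "(1 / 2 :: real) ^ k"
  let ?\<delta> = "\<epsilon> * real (F0 \<alpha> X) * ?p"
  let ?Y = "\<lambda>hs. \<Sum>i\<in>?U. (real (occurrences \<alpha> X i) - 1) * (indicator (sampled k hs) i - ?p)"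
  have "0 < ?\<delta>"
    using False \<epsilon>_pos by simp
  have "?U \<subseteq> {..<2 ^ width}"
    using inputs less_two_power_width by force
  have "measure_pmf.prob (replicate_pmf max_level (hash_pmf width)) {hs. ?\<delta> < \<bar>?Y hs\<bar>}
    \<le> measure_pmf.prob (replicate_pmf max_level (hash_pmf width)) {hs. ?\<delta> \<le> \<bar>?Y hs\<bar>}"
    by (intro measure_pmf.finite_measure_mono) auto
  also have "\<dots> \<le> (\<Sum>i\<in>?U. (real (occurrences \<alpha> X i) - 1)\<^sup>2) * (?p - (1 / 4) ^ k) / ?\<delta>\<^sup>2"
    using finite_input \<open>?U \<subseteq> {..<2 ^ width}\<close> \<open>0 < ?\<delta>\<close>
    by (intro prob_sampled_deviation_ge) (auto simp: k_def level_le_max_level)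
  also have "\<dots> \<le> 1 / 6"
    using excess_variance_le[OF assms(1,2)] \<open>0 < ?\<delta>\<close> by (simp add: k_def divide_le_eq)
  finally show ?thesis .
qed

lemma prob_output_of_protocol:
  "measure_pmf.prob (seeds protocol \<alpha>) {rs. Q (output_of protocol \<alpha> X rs)}
    = measure_pmf.prob (replicate_pmf max_level (hash_pmf width))
        {hs. Q (estimate (X 0) (to_nat hs) (honest_transcript X hs))}"
proof -
  have "measure_pmf.prob (seeds protocol \<alpha>) {rs. Q (output_of protocol \<alpha> X rs)}
    = measure_pmf.prob (seeds protocol \<alpha>) {rs. Q (estimate (X 0) (rs 0) (honest_transcript X (from_nat (rs 0))))}"
    by (simp add: output_of_def final_transcript_protocol)
  also have "\<dots> = measure_pmf.prob (replicate_pmf max_level (hash_pmf width))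
      {hs. Q (estimate (X 0) (to_nat hs) (honest_transcript X hs))}"
    using \<alpha>_pos prob_Pi_pmf_component[of "{..<\<alpha>}" 0 0 _ "\<lambda>s. Q (estimate (X 0) s (honest_transcript X (from_nat s)))"]
    by (simp add: seeds_def vimage_def)
  finally show ?thesis .
qed

lemma honest_estimate_accurate:
  assumes "hs \<in> set_pmf (replicate_pmf max_level (hash_pmf width))"
    and "\<not> budget (total_size \<alpha> X) < sample_count X (message X hs)"
    and "\<bar>\<Sum>i\<in>(\<Union>a<\<alpha>. X a). (real (occurrences \<alpha> X i) - 1)
        * (indicator (sampled (level (total_size \<alpha> X)) hs) i - (1 / 2) ^ level (total_size \<alpha> X))\<bar>
      \<le> \<epsilon> * real (F0 \<alpha> X) * (1 / 2) ^ level (total_size \<alpha> X)"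
  shows "\<bar>estimate (X 0) (to_nat hs) (honest_transcript X hs) - real (F0 \<alpha> X)\<bar> \<le> \<epsilon> * real (F0 \<alpha> X)"
proof -
  let ?k = "level (total_size \<alpha> X)"
  let ?p = "(1 / 2 :: real) ^ ?k"
  let ?Y = "\<Sum>i\<in>(\<Union>a<\<alpha>. X a). (real (occurrences \<alpha> X i) - 1) * (indicator (sampled ?k hs) i - ?p)"
  have "estimate (X 0) (to_nat hs) (honest_transcript X hs) = real (F0 \<alpha> X) - 2 ^ ?k * ?Y"
    using estimate_honest[of "to_nat hs" hs] honest_estimate_eq[OF assms(1)] assms(2) by simp
  moreover have "\<bar>2 ^ ?k * ?Y\<bar> \<le> 2 ^ ?k * (\<epsilon> * real (F0 \<alpha> X) * ?p)"
    using assms(3) by (simp add: abs_mult)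
  moreover have "(2::real) ^ ?k * ?p = 1"
    by (simp add: power_mult_distrib[symmetric])
  ultimately show ?thesis
    by (simp add: algebra_simps)
qed

lemma prob_accurate:
  assumes "collisions \<alpha> X \<le> C" "C \<le> F0 \<alpha> X"
  shows "measure_pmf.prob (seeds protocol \<alpha>)
      {rs. (1 - \<epsilon>) * real (F0 \<alpha> X) \<le> output_of protocol \<alpha> X rs
           \<and> output_of protocol \<alpha> X rs \<le> (1 + \<epsilon>) * real (F0 \<alpha> X)} \<ge> 2 / 3"
proof -
  let ?M = "replicate_pmf max_level (hash_pmf width)"
  let ?F = "real (F0 \<alpha> X)"
  let ?k = "level (total_size \<alpha> X)"
  let ?Y = "\<lambda>hs. \<Sum>i\<in>(\<Union>a<\<alpha>. X a).
    (real (occurrences \<alpha> X i) - 1) * (indicator (sampled ?k hs) i - (1 / 2) ^ ?k)"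
  let ?bad = "{hs. budget (total_size \<alpha> X) < sample_count X (message X hs)}
    \<union> {hs. \<epsilon> * ?F * (1 / 2) ^ ?k < \<bar>?Y hs\<bar>}"
  have "measure_pmf.prob ?M ?bad
      \<le> measure_pmf.prob ?M {hs. budget (total_size \<alpha> X) < sample_count X (message X hs)}
        + measure_pmf.prob ?M {hs. \<epsilon> * ?F * (1 / 2) ^ ?k < \<bar>?Y hs\<bar>}"
    by (rule measure_Un_le) auto
  then have "measure_pmf.prob ?M ?bad \<le> 1 / 6 + 1 / 6"
    using prob_abort_le prob_deviation_le[OF assms] by linarith
  then have "2 / 3 \<le> measure_pmf.prob ?M (- ?bad)"
    using prob_pmf_compl[of ?M ?bad] by linarith
  also have "\<dots> = measure_pmf.prob ?M (- ?bad \<inter> set_pmf ?M)"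
    by (rule measure_Int_set_pmf[symmetric])
  also have "\<dots> \<le> measure_pmf.prob ?M
      {hs. \<bar>estimate (X 0) (to_nat hs) (honest_transcript X hs) - ?F\<bar> \<le> \<epsilon> * ?F}"
    using honest_estimate_accurate by (intro measure_pmf.finite_measure_mono) (auto simp: not_less)
  also have "\<dots> = measure_pmf.prob (seeds protocol \<alpha>) {rs. \<bar>output_of protocol \<alpha> X rs - ?F\<bar> \<le> \<epsilon> * ?F}"
    by (rule prob_output_of_protocol[symmetric])
  also have "{rs. \<bar>output_of protocol \<alpha> X rs - ?F\<bar> \<le> \<epsilon> * ?F}
    = {rs. (1 - \<epsilon>) * ?F \<le> output_of protocol \<alpha> X rs \<and> output_of protocol \<alpha> X rs \<le> (1 + \<epsilon>) * ?F}"
    by (auto simp: abs_le_iff algebra_simps)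
  finally show ?thesis .
qed

lemma total_size_le_two_power_max_level: "real (total_size \<alpha> X) \<le> 2 ^ max_level"
proof -
  have "total_size \<alpha> X \<le> \<alpha> * n"
    using sum_bounded_above[of "{..<\<alpha>}" "\<lambda>a. card (X a)" n] card_input_Int_le[of _ UNIV]
    by (simp add: total_size_def)
  then have "real (total_size \<alpha> X) \<le> real \<alpha> * real n"
    by (metis of_nat_le_iff of_nat_mult)
  then show ?thesis
    using alpha_times_n_le_two_power_max_level by linarith
qed

lemma budget_le:
  "budget (total_size \<alpha> X) \<le> 6 + 576 * real C / (\<epsilon>\<^sup>2 * real (F0 \<alpha> X))"
proof -
  let ?S = "total_size \<alpha> X"
  let ?k = "level ?S"
  have "0 \<le> 576 * real C / (\<epsilon>\<^sup>2 * real (F0 \<alpha> X))"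
    by simp
  moreover have "budget ?S \<le> 6 + 576 * real C / (\<epsilon>\<^sup>2 * real (F0 \<alpha> X))" if "0 < ?S"
  proof (cases "?k = max_level")
    case True
    have "real ?S \<le> 2 ^ max_level"
      by (rule total_size_le_two_power_max_level)
    then have "budget ?S \<le> 6"
      using True by (simp add: budget_def divide_le_eq del: of_nat_le_iff)
    then show ?thesis
      using \<open>0 \<le> 576 * real C / (\<epsilon>\<^sup>2 * real (F0 \<alpha> X))\<close> by linarith
  next
    case False
    then have "\<epsilon>\<^sup>2 * (real ?S)\<^sup>2 < 2 ^ (?k + 1) * 48 * real C"
      using level_le_max_level level_less_max_level_imp by (simp add: order.strict_iff_order)
    have "0 < F0 \<alpha> X"
    proof (rule ccontr)
      assume "\<not> 0 < F0 \<alpha> X"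
      then have "\<forall>a<\<alpha>. X a = {}"
        using finite_input by (auto simp: F0_def)
      with that show False
        by (simp add: total_size_def)
    qed
    have pos: "0 < \<epsilon>\<^sup>2 * real ?S * 2 ^ ?k"
      using that \<epsilon>_pos by simp
    have "budget ?S = 6 * (\<epsilon>\<^sup>2 * (real ?S)\<^sup>2) / (\<epsilon>\<^sup>2 * real ?S * 2 ^ ?k)"
      using that \<epsilon>_pos by (simp add: budget_def power2_eq_square)
    also have "\<dots> \<le> 6 * (2 ^ (?k + 1) * 48 * real C) / (\<epsilon>\<^sup>2 * real ?S * 2 ^ ?k)"
      using \<open>\<epsilon>\<^sup>2 * (real ?S)\<^sup>2 < 2 ^ (?k + 1) * 48 * real C\<close> pos
      by (intro divide_right_mono mult_left_mono) auto
    also have "\<dots> = 576 * real C / (\<epsilon>\<^sup>2 * real ?S)"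
      by (simp add: field_simps)
    also have "\<dots> \<le> 576 * real C / (\<epsilon>\<^sup>2 * real (F0 \<alpha> X))"
      using \<open>0 < F0 \<alpha> X\<close> F0_le_total_size[of \<alpha> X] finite_input \<epsilon>_pos
      by (intro divide_left_mono mult_left_mono mult_pos_pos) auto
    finally show ?thesis
      by linarith
  qed
  ultimately show ?thesis
    by (cases "?S = 0") (auto simp: budget_def)
qed

lemma cost_le:
  assumes "rs \<in> set_pmf (seeds protocol \<alpha>)"
  shows "real (comm_cost protocol \<alpha> X rs) \<le> 10000 * log_scale *
    (real \<alpha> * log 2 (real n + 1) + max (1 / real (F0 \<alpha> X)) (\<epsilon>\<^sup>2) * (real C / \<epsilon>\<^sup>2) * log 2 (real n + 1))"
proof -
  let ?l = "log 2 (real n + 1)"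
  let ?Z = "real C / (\<epsilon>\<^sup>2 * real (F0 \<alpha> X))"
  have "rs 0 \<in> set_pmf (rnd protocol 0)"
    using assms \<alpha>_pos by (auto simp: seeds_def set_Pi_pmf PiE_dflt_def)
  then have hs: "from_nat (rs 0) \<in> set_pmf (replicate_pmf max_level (hash_pmf width))"
    by auto
  have "real (comm_cost protocol \<alpha> X rs) = real (transcript_cost (honest_transcript X (from_nat (rs 0))))"
    by (simp add: comm_cost_eq_transcript_cost final_transcript_protocol)
  also have "\<dots> \<le> (3 * real \<alpha> + budget (total_size \<alpha> X)) * real (2 + width + max_level * Suc width)"
    by (rule cost_honest[OF hs])
  also have "\<dots> \<le> (3 * real \<alpha> + (6 + 576 * ?Z)) * (16 * log_scale * ?l)"
    using budget_le exchange_overhead_le \<alpha>_pos by (intro mult_mono add_left_mono) auto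
  also have "\<dots> \<le> (576 * (real \<alpha> + ?Z)) * (16 * log_scale * ?l)"
    using \<alpha>_pos one_le_log_scale one_le_log_n by (intro mult_right_mono) auto
  also have "\<dots> = 9216 * log_scale * (real \<alpha> * ?l + ?Z * ?l)"
    by (simp add: algebra_simps)
  also have "\<dots> \<le> 10000 * log_scale *
      (real \<alpha> * ?l + max (1 / real (F0 \<alpha> X)) (\<epsilon>\<^sup>2) * (real C / \<epsilon>\<^sup>2) * ?l)"
  proof (intro mult_mono add_left_mono mult_right_mono)
    have "?Z = 1 / real (F0 \<alpha> X) * (real C / \<epsilon>\<^sup>2)"
      by simp
    also have "\<dots> \<le> max (1 / real (F0 \<alpha> X)) (\<epsilon>\<^sup>2) * (real C / \<epsilon>\<^sup>2)"
      by (intro mult_right_mono) auto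
    finally show "?Z \<le> max (1 / real (F0 \<alpha> X)) (\<epsilon>\<^sup>2) * (real C / \<epsilon>\<^sup>2)" .
  qed (use one_le_log_scale one_le_log_n in \<open>auto simp: le_max_iff_disj\<close>)
  finally show ?thesis .
qed

end

end

theorem theorem1p2:
  shows "\<exists>K c::real. \<forall>(n::nat) (\<alpha>::nat) (\<epsilon>::real) (C::nat).
     0 < n \<longrightarrow> 0 < \<alpha> \<longrightarrow> 0 < \<epsilon> \<longrightarrow> \<epsilon> < 1 \<longrightarrow>
     (\<exists>P. \<forall>X. (\<forall>a<\<alpha>. X a \<subseteq> {..<n}) \<longrightarrow> collisions \<alpha> X \<le> C \<longrightarrow> C \<le> F0 \<alpha> X \<longrightarrow>
        (\<forall>rs \<in> set_pmf (seeds P \<alpha>).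
           real (comm_cost P \<alpha> X rs)
             \<le> K * (log 2 (real n + real \<alpha> + 1 / \<epsilon> + 1)) powr c *
                (real \<alpha> * log 2 (real n + 1)
                 + max (1 / real (F0 \<alpha> X)) (\<epsilon>\<^sup>2) * (real C / \<epsilon>\<^sup>2) * log 2 (real n + 1)))
        \<and> measure_pmf.prob (seeds P \<alpha>)
            {rs. (1 - \<epsilon>) * real (F0 \<alpha> X) \<le> output_of P \<alpha> X rs
                 \<and> output_of P \<alpha> X rs \<le> (1 + \<epsilon>) * real (F0 \<alpha> X)} \<ge> 2 / 3)"
  apply (rule exI[of _ 10000], rule exI[of _ 1], intro allI impI)
  subgoal premises positive for n \<alpha> \<epsilon> C
  proof -
    interpret distinct_sampling n \<alpha> \<epsilon> C
      using positive by unfold_locales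
    have "log_scale powr 1 = log_scale"
      using one_le_log_scale by simp
    then show ?thesis
      using cost_le prob_accurate by (intro exI[of _ protocol]) (auto simp: log_scale_def)
  qed
  done

end
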